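(* Let $\mathcal{C}$ and $\mathcal{D}$ be categories, let $R$ be a monad on the product category $\mathcal{C}\times\mathcal{D}$ (with unit $\eta$ and Kleisli extension $\mathrm{bind}$), and let $A\in\mathcal{D}$. For $X\in\mathcal{C}$ put $R_{A,1}(X):=\mathrm{pr}_{\mathcal{C}}(R(X,A))$ and $\eta'_X:=\mathrm{pr}_{\mathcal{C}}(\eta_{(X,A)}):X\to R_{A,1}(X)$. For $X,X'\in\mathcal{C}$ and a morphism $f:X\to R_{A,1}(X')$, put $$\mathrm{bind}'(f):=\mathrm{pr}_{\mathcal{C}}\big(\mathrm{bind}(f,\mathrm{pr}_{\mathcal{D}}(\eta_{(X',A)}))\big):R_{A,1}(X)\to R_{A,1}(X'),$$ where $(f,\mathrm{pr}_{\mathcal{D}}(\eta_{(X',A)})):(X,A)\to R(X',A)$ is the morphism of $\mathcal{C}\times\mathcal{D}$ with the indicated components. Then $(R_{A,1},\eta',\mathrm{bind}')$ is a monad on $\mathcal{C}$, i.e. $\mathrm{bind}'(\eta'_X)=\mathrm{id}$, $\mathrm{bind}'(f)\circ\eta'_X=f$, and $\mathrm{bind}'(\mathrm{bind}'(g)\circ f)=\mathrm{bind}'(g)\circ\mathrm{bind}'(f)$ for all $f:X\to R_{A,1}(X')$, $g:X'\to R_{A,1}(X'')$.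
   Context: A monad on a category $\mathcal{E}$ is described in Kleisli form: an object $R(X)$ for each object $X$, morphisms $\eta_X:X\to R(X)$, and for each $f:X\to R(Y)$ a morphism $\mathrm{bind}(f):R(X)\to R(Y)$, such that $\mathrm{bind}(\eta_X)=\mathrm{id}_{R(X)}$, $\mathrm{bind}(f)\circ\eta_X=f$, and $\mathrm{bind}(\mathrm{bind}(g)\circ f)=\mathrm{bind}(g)\circ\mathrm{bind}(f)$ (here $\circ$ is the usual composition, $g\circ f$ meaning first $f$ then $g$). $\mathrm{pr}_{\mathcal{C}},\mathrm{pr}_{\mathcal{D}}$ are the projection functors of $\mathcal{C}\times\mathcal{D}$. *)

theory Defs
  imports Main
begin

text \<open>A category given by its object set, hom-sets, identities and composition
  (Comp g f means first f then g).\<close>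
record ('o, 'm) cat =
  Obj :: "'o set"
  Hom :: "'o \<Rightarrow> 'o \<Rightarrow> 'm set"
  Id :: "'o \<Rightarrow> 'm"
  Comp :: "'m \<Rightarrow> 'm \<Rightarrow> 'm"

definition category :: "('o, 'm) cat \<Rightarrow> bool" where
  "category C \<longleftrightarrow>
     (\<forall>X\<in>Obj C. Id C X \<in> Hom C X X) \<and>
     (\<forall>X\<in>Obj C. \<forall>Y\<in>Obj C. \<forall>Z\<in>Obj C. \<forall>f\<in>Hom C X Y. \<forall>g\<in>Hom C Y Z.
        Comp C g f \<in> Hom C X Z) \<and>
     (\<forall>X\<in>Obj C. \<forall>Y\<in>Obj C. \<forall>f\<in>Hom C X Y.
        Comp C f (Id C X) = f \<and> Comp C (Id C Y) f = f) \<and>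
     (\<forall>W\<in>Obj C. \<forall>X\<in>Obj C. \<forall>Y\<in>Obj C. \<forall>Z\<in>Obj C.
        \<forall>f\<in>Hom C W X. \<forall>g\<in>Hom C X Y. \<forall>h\<in>Hom C Y Z.
        Comp C h (Comp C g f) = Comp C (Comp C h g) f)"

text \<open>Product category; its projection functors are fst and snd on objects and morphisms.\<close>
definition prod_cat :: "('o1, 'm1) cat \<Rightarrow> ('o2, 'm2) cat \<Rightarrow> ('o1 \<times> 'o2, 'm1 \<times> 'm2) cat" where
  "prod_cat C D =
     \<lparr> Obj = Obj C \<times> Obj D,
       Hom = (\<lambda>(X, A) (Y, B). Hom C X Y \<times> Hom D A B),
       Id = (\<lambda>(X, A). (Id C X, Id D A)),
       Comp = (\<lambda>(g1, g2) (f1, f2). (Comp C g1 f1, Comp D g2 f2)) \<rparr>"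

definition kleisli_monad ::
  "('o, 'm) cat \<Rightarrow> ('o \<Rightarrow> 'o) \<Rightarrow> ('o \<Rightarrow> 'm) \<Rightarrow> ('o \<Rightarrow> 'o \<Rightarrow> 'm \<Rightarrow> 'm) \<Rightarrow> bool" where
  "kleisli_monad E R eta bind \<longleftrightarrow>
     (\<forall>X\<in>Obj E. R X \<in> Obj E) \<and>
     (\<forall>X\<in>Obj E. eta X \<in> Hom E X (R X)) \<and>
     (\<forall>X\<in>Obj E. \<forall>Y\<in>Obj E. \<forall>f\<in>Hom E X (R Y). bind X Y f \<in> Hom E (R X) (R Y)) \<and>
     (\<forall>X\<in>Obj E. bind X X (eta X) = Id E (R X)) \<and>
     (\<forall>X\<in>Obj E. \<forall>Y\<in>Obj E. \<forall>f\<in>Hom E X (R Y). Comp E (bind X Y f) (eta X) = f) \<and>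
     (\<forall>X\<in>Obj E. \<forall>Y\<in>Obj E. \<forall>Z\<in>Obj E. \<forall>f\<in>Hom E X (R Y). \<forall>g\<in>Hom E Y (R Z).
        bind X Z (Comp E (bind Y Z g) f) = Comp E (bind Y Z g) (bind X Y f))"

end

theory Submission
  imports Defs
begin

text \<open>The monad laws of R on C \<times> D hold componentwise. In the fibre over A every
  Kleisli map is paired with the D-component of the unit; by the right unit law the
  D-component of bind' g \<circ> f is then again that unit, so the associativity law of R
  restricts to the fibre.\<close>

lemma prod_cat_simps [simp]:
  "Obj (prod_cat C D) = Obj C \<times> Obj D"
  "Hom (prod_cat C D) P Q = Hom C (fst P) (fst Q) \<times> Hom D (snd P) (snd Q)"
  "Id (prod_cat C D) P = (Id C (fst P), Id D (snd P))"
  "Comp (prod_cat C D) g f = (Comp C (fst g) (fst f), Comp D (snd g) (snd f))"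
  by (auto simp: prod_cat_def split: prod.splits)

context
  fixes E :: "('o, 'm) cat" and R :: "'o \<Rightarrow> 'o" and eta :: "'o \<Rightarrow> 'm"
    and bind :: "'o \<Rightarrow> 'o \<Rightarrow> 'm \<Rightarrow> 'm"
  assumes monad: "kleisli_monad E R eta bind"
begin

lemma kleisli_monad_obj: "X \<in> Obj E \<Longrightarrow> R X \<in> Obj E"
  using monad by (simp add: kleisli_monad_def)

lemma kleisli_monad_eta_hom: "X \<in> Obj E \<Longrightarrow> eta X \<in> Hom E X (R X)"
  using monad by (simp add: kleisli_monad_def)

lemma kleisli_monad_bind_hom:
  "X \<in> Obj E \<Longrightarrow> Y \<in> Obj E \<Longrightarrow> f \<in> Hom E X (R Y) \<Longrightarrow> bind X Y f \<in> Hom E (R X) (R Y)"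
  using monad by (simp add: kleisli_monad_def)

lemma kleisli_monad_bind_eta: "X \<in> Obj E \<Longrightarrow> bind X X (eta X) = Id E (R X)"
  using monad by (simp add: kleisli_monad_def)

lemma kleisli_monad_bind_comp_eta:
  "X \<in> Obj E \<Longrightarrow> Y \<in> Obj E \<Longrightarrow> f \<in> Hom E X (R Y) \<Longrightarrow> Comp E (bind X Y f) (eta X) = f"
  using monad by (simp add: kleisli_monad_def)

lemma kleisli_monad_bind_assoc:
  "X \<in> Obj E \<Longrightarrow> Y \<in> Obj E \<Longrightarrow> Z \<in> Obj E \<Longrightarrow> f \<in> Hom E X (R Y) \<Longrightarrow> g \<in> Hom E Y (R Z)
   \<Longrightarrow> bind X Z (Comp E (bind Y Z g) f) = Comp E (bind Y Z g) (bind X Y f)"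
  using monad by (simp add: kleisli_monad_def)

end

locale kleisli_monad_on_prod =
  fixes C :: "('o1, 'm1) cat" and D :: "('o2, 'm2) cat"
    and R :: "'o1 \<times> 'o2 \<Rightarrow> 'o1 \<times> 'o2"
    and eta :: "'o1 \<times> 'o2 \<Rightarrow> 'm1 \<times> 'm2"
    and bind :: "'o1 \<times> 'o2 \<Rightarrow> 'o1 \<times> 'o2 \<Rightarrow> 'm1 \<times> 'm2 \<Rightarrow> 'm1 \<times> 'm2"
  assumes monad: "kleisli_monad (prod_cat C D) R eta bind"
begin

lemma R_obj: "P \<in> Obj C \<times> Obj D \<Longrightarrow> R P \<in> Obj C \<times> Obj D"
  using kleisli_monad_obj[OF monad, of P] by simp

lemma eta_hom:
  assumes "P \<in> Obj C \<times> Obj D"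
  shows "fst (eta P) \<in> Hom C (fst P) (fst (R P))" "snd (eta P) \<in> Hom D (snd P) (snd (R P))"
  using kleisli_monad_eta_hom[OF monad, of P] assms by (simp_all add: mem_Times_iff)

lemma bind_hom:
  assumes "P \<in> Obj C \<times> Obj D" "Q \<in> Obj C \<times> Obj D"
    and "f \<in> Hom C (fst P) (fst (R Q))" "g \<in> Hom D (snd P) (snd (R Q))"
  shows "fst (bind P Q (f, g)) \<in> Hom C (fst (R P)) (fst (R Q))"
    and "snd (bind P Q (f, g)) \<in> Hom D (snd (R P)) (snd (R Q))"
  using kleisli_monad_bind_hom[OF monad, of P Q "(f, g)"] assms by (simp_all add: mem_Times_iff)

lemma fst_bind_eta: "P \<in> Obj C \<times> Obj D \<Longrightarrow> fst (bind P P (eta P)) = Id C (fst (R P))"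
  using kleisli_monad_bind_eta[OF monad, of P] by simp

lemma bind_comp_eta:
  assumes "P \<in> Obj C \<times> Obj D" "Q \<in> Obj C \<times> Obj D"
    and "f \<in> Hom C (fst P) (fst (R Q))" "g \<in> Hom D (snd P) (snd (R Q))"
  shows "Comp C (fst (bind P Q (f, g))) (fst (eta P)) = f"
    and "Comp D (snd (bind P Q (f, g))) (snd (eta P)) = g"
  using kleisli_monad_bind_comp_eta[OF monad, of P Q "(f, g)"] assms by simp_all

lemma fst_bind_assoc:
  assumes "P \<in> Obj C \<times> Obj D" "Q \<in> Obj C \<times> Obj D" "S \<in> Obj C \<times> Obj D"
    and "f \<in> Hom C (fst P) (fst (R Q))" "f' \<in> Hom D (snd P) (snd (R Q))"
    and "g \<in> Hom C (fst Q) (fst (R S))" "g' \<in> Hom D (snd Q) (snd (R S))"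
  shows "fst (bind P S (Comp C (fst (bind Q S (g, g'))) f, Comp D (snd (bind Q S (g, g'))) f'))
       = Comp C (fst (bind Q S (g, g'))) (fst (bind P Q (f, f')))"
  using kleisli_monad_bind_assoc[OF monad, of P Q S "(f, f')" "(g, g')"] assms by simp

context
  fixes A :: 'o2
  assumes A: "A \<in> Obj D"
begin

lemma fibre_snd_eta_hom: "Y \<in> Obj C \<Longrightarrow> snd (eta (Y, A)) \<in> Hom D A (snd (R (Y, A)))"
  using eta_hom(2)[of "(Y, A)"] A by simp

lemma fibre_bind_hom:
  assumes "X \<in> Obj C" "Y \<in> Obj C" "f \<in> Hom C X (fst (R (Y, A)))"
  shows "fst (bind (X, A) (Y, A) (f, snd (eta (Y, A)))) \<in> Hom C (fst (R (X, A))) (fst (R (Y, A)))"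
  using assms A fibre_snd_eta_hom[OF assms(2)] by (intro bind_hom) auto

lemma fibre_bind_comp_eta:
  assumes "X \<in> Obj C" "Y \<in> Obj C" "f \<in> Hom C X (fst (R (Y, A)))"
  shows "Comp C (fst (bind (X, A) (Y, A) (f, snd (eta (Y, A))))) (fst (eta (X, A))) = f"
    and "Comp D (snd (bind (X, A) (Y, A) (f, snd (eta (Y, A))))) (snd (eta (X, A)))
         = snd (eta (Y, A))"
  using assms A fibre_snd_eta_hom[OF assms(2)] by (intro bind_comp_eta; simp)+

lemma fibre_kleisli_monad:
  "kleisli_monad C (\<lambda>X. fst (R (X, A))) (\<lambda>X. fst (eta (X, A)))
     (\<lambda>X X' f. fst (bind (X, A) (X', A) (f, snd (eta (X', A)))))"
  unfolding kleisli_monad_def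
proof (intro conjI ballI)
  fix X assume X: "X \<in> Obj C"
  then show "fst (R (X, A)) \<in> Obj C"
    using R_obj[of "(X, A)"] A by (simp add: mem_Times_iff)
  show "fst (eta (X, A)) \<in> Hom C X (fst (R (X, A)))"
    using eta_hom(1)[of "(X, A)"] X A by simp
  show "fst (bind (X, A) (X, A) (fst (eta (X, A)), snd (eta (X, A)))) = Id C (fst (R (X, A)))"
    using fst_bind_eta[of "(X, A)"] X A by simp
next
  fix X Y f assume "X \<in> Obj C" "Y \<in> Obj C" "f \<in> Hom C X (fst (R (Y, A)))"
  then show "fst (bind (X, A) (Y, A) (f, snd (eta (Y, A)))) \<in> Hom C (fst (R (X, A))) (fst (R (Y, A)))"
    and "Comp C (fst (bind (X, A) (Y, A) (f, snd (eta (Y, A))))) (fst (eta (X, A))) = f"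
    by (rule fibre_bind_hom fibre_bind_comp_eta)+
next
  fix X Y Z f g
  assume X: "X \<in> Obj C" and Y: "Y \<in> Obj C" and Z: "Z \<in> Obj C"
    and f: "f \<in> Hom C X (fst (R (Y, A)))" and g: "g \<in> Hom C Y (fst (R (Z, A)))"
  let ?g\<^sub>D = "snd (bind (Y, A) (Z, A) (g, snd (eta (Z, A))))"
  have unit: "Comp D ?g\<^sub>D (snd (eta (Y, A))) = snd (eta (Z, A))"
    using fibre_bind_comp_eta(2)[OF Y Z g] .
  show "fst (bind (X, A) (Z, A) (Comp C (fst (bind (Y, A) (Z, A) (g, snd (eta (Z, A))))) f, snd (eta (Z, A))))
      = Comp C (fst (bind (Y, A) (Z, A) (g, snd (eta (Z, A))))) (fst (bind (X, A) (Y, A) (f, snd (eta (Y, A)))))"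
    using fst_bind_assoc[of "(X, A)" "(Y, A)" "(Z, A)" f "snd (eta (Y, A))" g "snd (eta (Z, A))"]
      X Y Z f g A fibre_snd_eta_hom[OF Y] fibre_snd_eta_hom[OF Z]
    by (simp add: unit)
qed

end

end

theorem lemma2p2:
  fixes C :: "('o1, 'm1) cat" and D :: "('o2, 'm2) cat"
    and R :: "'o1 \<times> 'o2 \<Rightarrow> 'o1 \<times> 'o2"
    and eta :: "'o1 \<times> 'o2 \<Rightarrow> 'm1 \<times> 'm2"
    and bind :: "'o1 \<times> 'o2 \<Rightarrow> 'o1 \<times> 'o2 \<Rightarrow> 'm1 \<times> 'm2 \<Rightarrow> 'm1 \<times> 'm2"
    and A :: 'o2
  assumes "category C" and "category D"
    and "kleisli_monad (prod_cat C D) R eta bind"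
    and "A \<in> Obj D"
  shows "kleisli_monad C (\<lambda>X. fst (R (X, A))) (\<lambda>X. fst (eta (X, A)))
           (\<lambda>X X' f. fst (bind (X, A) (X', A) (f, snd (eta (X', A)))))"
proof -
  interpret kleisli_monad_on_prod C D R eta bind
    using assms(3) by unfold_locales
  show ?thesis
    using fibre_kleisli_monad[OF assms(4)] .
qed

end
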